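(* Let $f\in L^1((0,\infty))$ and define, for $x>0$, $$\mathcal{H}f(x)=\frac{1}{x}\int_0^x f(t)\,dt-\frac{1}{1+x}\int_0^\infty f(t)\,dt.$$ If $$\int_0^\infty |f(t)|\left[\ln\left(1+\frac{1}{t}\right)+\ln(1+t)\right]dt<\infty,$$ then $\mathcal{H}f\in L^1((0,\infty))$. Conversely, if $f\in L^1((0,\infty))$ is non-negative and $\mathcal{H}f\in L^1((0,\infty))$, then $\int_0^\infty f(t)\left[\ln\left(1+\frac{1}{t}\right)+\ln(1+t)\right]dt<\infty$.
   Context: $L^1((0,\infty))$ denotes the space of measurable functions $f$ on $(0,\infty)$ with $\int_0^\infty |f(x)|\,dx<\infty$. *)

theory Defs
  imports "HOL-Analysis.Analysis"
begin

definition hardy_op :: "(real \<Rightarrow> real) \<Rightarrow> real \<Rightarrow> real" where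
  "hardy_op f x =
     (1 / x) * integral\<^sup>L (lebesgue_on {0<..x}) f
     - (1 / (1 + x)) * integral\<^sup>L (lebesgue_on {0<..}) f"

definition log_weight :: "real \<Rightarrow> real" where
  "log_weight t = ln (1 + 1 / t) + ln (1 + t)"

end

theory Submission
  imports Defs
begin

text \<open>
  With \<open>A = (\<integral>\<^sub>0\<^sup>x f) / (x (1 + x))\<close> and \<open>B = (\<integral>\<^sub>x\<^sup>\<infinity> f) / (1 + x)\<close> one has
  \<open>\<H>f x = A - B\<close>, while \<open>A + B = \<integral> f t k(x,t) dt\<close> for the kernel \<open>k(x,t)\<close> equal to
  \<open>1 / (x (1 + x))\<close> for \<open>t \<le> x\<close> and to \<open>1 / (1 + x)\<close> for \<open>t > x\<close>.
  Since \<open>\<integral>\<^sub>0\<^sup>\<infinity> k(x,t) dx = ln (1 + 1/t) + ln (1 + t)\<close>, Tonelli's theorem turns the weighted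
  norm of \<open>f\<close> into \<open>\<integral>\<integral> \<bar>f t\<bar> k(x,t) dt dx\<close>, which dominates \<open>\<integral> \<bar>\<H>f\<bar>\<close>.
  Conversely, for \<open>f \<ge> 0\<close> we have \<open>A + B = \<bar>A - B\<bar> + 2 min A B\<close>, and
  \<open>min A B \<le> (\<integral> f) k(x,1)\<close>, whose integral in \<open>x\<close> is \<open>2 ln 2 \<integral> f\<close>.
\<close>

lemma sigma_finite_lebesgue: "sigma_finite_measure (lebesgue :: 'a::euclidean_space measure)"
proof
  let ?A = "range (\<lambda>n::nat. cball (0::'a) (real n))"
  have "\<Union>?A = space lebesgue"
    by (auto simp: dist_norm intro: real_arch_simple)
  moreover have "\<forall>a\<in>?A. emeasure lebesgue a \<noteq> \<infinity>"
    using emeasure_bounded_finite by (auto simp: less_top)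
  ultimately show "\<exists>A. countable A \<and> A \<subseteq> sets (lebesgue :: 'a measure) \<and> \<Union>A = space lebesgue
      \<and> (\<forall>a\<in>A. emeasure lebesgue a \<noteq> \<infinity>)"
    by (intro exI[of _ ?A]) auto
qed

lemma ident_borel_measurable_lebesgue [measurable]: "(\<lambda>x. x) \<in> borel_measurable lebesgue"
  using id_borel_measurable_lebesgue by (simp add: id_def)

lemma ident_borel_measurable_lebesgue_on [measurable]: "(\<lambda>x. x) \<in> borel_measurable (lebesgue_on S)"
  using id_borel_measurable_lebesgue_on by (simp add: id_def)

lemma integral_lebesgue_on_eq_set_integral:
  fixes f :: "'a::euclidean_space \<Rightarrow> 'b::{banach, second_countable_topology}"
  assumes "A \<in> sets lebesgue"
  shows "integral\<^sup>L (lebesgue_on A) f = (LINT x:A|lebesgue. f x)"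
  using assms by (simp add: integral_restrict_space set_lebesgue_integral_def)

lemma set_integral_greaterThan_split:
  fixes f :: "real \<Rightarrow> 'b::{banach, second_countable_topology}"
  assumes f: "set_integrable lebesgue {a<..} f" and "a < x"
  shows "(LINT t:{a<..}|lebesgue. f t) = (LINT t:{a<..x}|lebesgue. f t) + (LINT t:{x<..}|lebesgue. f t)"
proof -
  have "set_integrable lebesgue {a<..x} f" "set_integrable lebesgue {x<..} f"
    using \<open>a < x\<close> by (auto intro!: set_integrable_subset[OF f])
  then have "(LINT t:{a<..x} \<union> {x<..}|lebesgue. f t)
      = (LINT t:{a<..x}|lebesgue. f t) + (LINT t:{x<..}|lebesgue. f t)"
    by (intro set_integral_Un) auto
  moreover have "{a<..x} \<union> {x<..} = {a<..}"
    using \<open>a < x\<close> by auto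
  ultimately show ?thesis by simp
qed

lemma nn_integral_inverse_mult_one_plus_atLeast:
  assumes "t > 0"
  shows "(\<integral>\<^sup>+x\<in>{t..}. ennreal (1 / (x * (1 + x))) \<partial>lborel) = ennreal (ln (1 + 1 / t))"
proof -
  have "(\<integral>\<^sup>+x\<in>{t..}. ennreal (1 / (x * (1 + x))) \<partial>lborel) = ennreal (0 - (ln t - ln (1 + t)))"
  proof (rule nn_integral_FTC_atLeast)
    fix x assume "t \<le> x"
    then have "x > 0" using assms by simp
    then show "((\<lambda>x. ln x - ln (1 + x)) has_real_derivative 1 / (x * (1 + x))) (at x)"
      by (auto intro!: derivative_eq_intros simp: field_simps)
  next
    have "((\<lambda>x::real. - ln (1 + inverse x)) \<longlongrightarrow> - ln (1 + 0)) at_top"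
      by (intro tendsto_intros tendsto_inverse_0_at_top filterlim_ident) auto
    moreover have "\<forall>\<^sub>F x in at_top. - ln (1 + inverse x) = ln x - ln (1 + x :: real)"
      using eventually_gt_at_top[of 0]
      by eventually_elim (simp add: field_simps ln_div)
    ultimately show "((\<lambda>x::real. ln x - ln (1 + x)) \<longlongrightarrow> 0) at_top"
      using tendsto_cong by fastforce
  qed (use assms in auto)
  also have "0 - (ln t - ln (1 + t)) = ln (1 + 1 / t)"
    using assms by (simp add: field_simps ln_div)
  finally show ?thesis .
qed

lemma nn_integral_inverse_one_plus_atLeastAtMost:
  assumes "t \<ge> 0"
  shows "(\<integral>\<^sup>+x\<in>{0..t}. ennreal (1 / (1 + x)) \<partial>lborel) = ennreal (ln (1 + t))"
proof -
  have "(\<integral>\<^sup>+x\<in>{0..t}. ennreal (1 / (1 + x)) \<partial>lborel) = ennreal (ln (1 + t) - ln (1 + 0))"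
    by (rule nn_integral_FTC_Icc) (use assms in \<open>auto intro!: derivative_eq_intros\<close>)
  then show ?thesis by simp
qed

lemma log_weight_nonneg: "0 < t \<Longrightarrow> 0 \<le> log_weight t"
  by (simp add: log_weight_def)

definition hardy_kernel :: "real \<Rightarrow> real \<Rightarrow> real" where
  "hardy_kernel x t = (if t \<le> x then 1 / (x * (1 + x)) else 1 / (1 + x))"

lemma hardy_kernel_nonneg: "0 < x \<Longrightarrow> 0 \<le> hardy_kernel x t"
  by (simp add: hardy_kernel_def)

lemma nn_integral_hardy_kernel:
  assumes "t > 0"
  shows "(\<integral>\<^sup>+x. hardy_kernel x t \<partial>lebesgue_on {0<..}) = log_weight t"
proof -
  have "AE x in lborel. ennreal (hardy_kernel x t) * indicator {0<..} x
      = ennreal (1 / (x * (1 + x))) * indicator {t..} x + ennreal (1 / (1 + x)) * indicator {0..t} x"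
    using AE_lborel_singleton[of 0] AE_lborel_singleton[of t]
    by eventually_elim (use assms in \<open>auto simp: hardy_kernel_def split: split_indicator\<close>)
  then have "(\<integral>\<^sup>+x. hardy_kernel x t \<partial>lebesgue_on {0<..})
      = (\<integral>\<^sup>+x\<in>{t..}. ennreal (1 / (x * (1 + x))) \<partial>lborel)
        + (\<integral>\<^sup>+x\<in>{0..t}. ennreal (1 / (1 + x)) \<partial>lborel)"
    by (simp add: nn_integral_restrict_space nn_integral_completion nn_integral_cong_AE
        nn_integral_add)
  also have "\<dots> = log_weight t"
    using assms by (simp add: nn_integral_inverse_mult_one_plus_atLeast nn_integral_inverse_one_plus_atLeastAtMost
        log_weight_def)
  finally show ?thesis .
qed

lemma nn_integral_log_weight_eq_hardy_kernel:
  fixes g :: "real \<Rightarrow> ennreal"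
  assumes [measurable]: "g \<in> borel_measurable (lebesgue_on {0<..})"
  shows "(\<integral>\<^sup>+t. g t * log_weight t \<partial>lebesgue_on {0<..})
       = (\<integral>\<^sup>+x. (\<integral>\<^sup>+t. g t * hardy_kernel x t \<partial>lebesgue_on {0<..}) \<partial>lebesgue_on {0<..})"
proof -
  interpret pair_sigma_finite "lebesgue_on {0::real<..}" "lebesgue_on {0::real<..}"
    by (auto simp: pair_sigma_finite_def intro!: sigma_finite_measure_restrict_space sigma_finite_lebesgue)
  have "(\<lambda>(x, t). g t * hardy_kernel x t)
      \<in> borel_measurable (lebesgue_on {0<..} \<Otimes>\<^sub>M lebesgue_on {0<..})"
    unfolding hardy_kernel_def by measurable
  then have "(\<integral>\<^sup>+x. (\<integral>\<^sup>+t. g t * hardy_kernel x t \<partial>lebesgue_on {0<..}) \<partial>lebesgue_on {0<..})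
      = (\<integral>\<^sup>+t. (\<integral>\<^sup>+x. g t * hardy_kernel x t \<partial>lebesgue_on {0<..}) \<partial>lebesgue_on {0<..})"
    by (rule Fubini'[symmetric])
  also have "\<dots> = (\<integral>\<^sup>+t. g t * log_weight t \<partial>lebesgue_on {0<..})"
  proof (rule nn_integral_cong)
    fix t assume "t \<in> space (lebesgue_on {0::real<..})"
    then have "0 < t" by simp
    have "(\<lambda>x. ennreal (hardy_kernel x t)) \<in> borel_measurable (lebesgue_on {0<..})"
      unfolding hardy_kernel_def by measurable
    then show "(\<integral>\<^sup>+x. g t * hardy_kernel x t \<partial>lebesgue_on {0<..}) = g t * log_weight t"
      by (simp add: nn_integral_cmult nn_integral_hardy_kernel[OF \<open>0 < t\<close>])
  qed
  finally show ?thesis ..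
qed

lemma hardy_op_eq:
  fixes f :: "real \<Rightarrow> real"
  assumes f: "set_integrable lebesgue {0<..} f" and "0 < x"
  shows "hardy_op f x = (LINT t:{0<..x}|lebesgue. f t) / (x * (1 + x))
                      - (LINT t:{x<..}|lebesgue. f t) / (1 + x)"
proof -
  have "hardy_op f x = (LINT t:{0<..x}|lebesgue. f t) / x
      - ((LINT t:{0<..x}|lebesgue. f t) + (LINT t:{x<..}|lebesgue. f t)) / (1 + x)"
    using set_integral_greaterThan_split[OF assms]
    by (simp add: hardy_op_def integral_lebesgue_on_eq_set_integral)
  also have "\<dots> = (LINT t:{0<..x}|lebesgue. f t) / (x * (1 + x))
                      - (LINT t:{x<..}|lebesgue. f t) / (1 + x)"
    using \<open>0 < x\<close> by (simp add: divide_simps) (simp add: algebra_simps)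
  finally show ?thesis .
qed

lemma borel_measurable_hardy_op:
  fixes f :: "real \<Rightarrow> real"
  assumes "set_integrable lebesgue {0<..} f"
  shows "hardy_op f \<in> borel_measurable (lebesgue_on {0<..})"
proof -
  interpret sigma_finite_measure "lebesgue :: real measure"
    by (rule sigma_finite_lebesgue)
  define g where "g t = indicator {0<..} t * f t" for t
  have [measurable]: "g \<in> borel_measurable lebesgue"
    using assms unfolding set_integrable_def g_def by auto
  have "integral\<^sup>L (lebesgue_on {0<..x}) f = (\<integral>t. (if t \<le> x then g t else 0) \<partial>lebesgue)" for x
    by (auto simp: integral_lebesgue_on_eq_set_integral set_lebesgue_integral_def g_def
        intro!: Bochner_Integration.integral_cong split: split_indicator)
  then have "hardy_op f = (\<lambda>x. 1 / x * (\<integral>t. (if t \<le> x then g t else 0) \<partial>lebesgue)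
      - 1 / (1 + x) * integral\<^sup>L (lebesgue_on {0<..}) f)"
    by (simp add: hardy_op_def fun_eq_iff)
  also have "\<dots> \<in> borel_measurable (lebesgue_on {0<..})"
    by measurable
  finally show ?thesis .
qed

lemma nn_integral_mult_hardy_kernel:
  fixes f :: "real \<Rightarrow> real"
  assumes f: "set_integrable lebesgue {0<..} f" and nonneg: "\<And>t. 0 < t \<Longrightarrow> 0 \<le> f t"
    and "0 < x"
  shows "(\<integral>\<^sup>+t. ennreal (f t) * hardy_kernel x t \<partial>lebesgue_on {0<..})
       = (LINT t:{0<..x}|lebesgue. f t) / (x * (1 + x)) + (LINT t:{x<..}|lebesgue. f t) / (1 + x)"
proof -
  define g where "g t = indicator {0<..x} t *\<^sub>R f t / (x * (1 + x)) + indicator {x<..} t *\<^sub>R f t / (1 + x)"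
    for t :: real
  have "set_integrable lebesgue {0<..x} f" "set_integrable lebesgue {x<..} f"
    using \<open>0 < x\<close> by (auto intro!: set_integrable_subset[OF f])
  then have g_int: "integrable lebesgue g"
    unfolding g_def set_integrable_def by (intro Bochner_Integration.integrable_add integrable_divide_zero)
  have "ennreal (f t) * hardy_kernel x t * indicator {0<..} t = ennreal (g t)" for t
    using \<open>0 < x\<close> nonneg[of t]
    by (auto simp: g_def hardy_kernel_def ennreal_mult'[symmetric] split: split_indicator)
  then have "(\<integral>\<^sup>+t. ennreal (f t) * hardy_kernel x t \<partial>lebesgue_on {0<..}) = (\<integral>\<^sup>+t. g t \<partial>lebesgue)"
    by (simp add: nn_integral_restrict_space)
  also have "\<dots> = integral\<^sup>L lebesgue g"
    using \<open>0 < x\<close> nonneg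
    by (intro nn_integral_eq_integral g_int) (auto simp: g_def split: split_indicator)
  also have "\<dots> = (LINT t:{0<..x}|lebesgue. f t) / (x * (1 + x)) + (LINT t:{x<..}|lebesgue. f t) / (1 + x)"
    using \<open>set_integrable lebesgue {0<..x} f\<close> \<open>set_integrable lebesgue {x<..} f\<close>
    unfolding g_def set_lebesgue_integral_def set_integrable_def
    by (simp add: integrable_divide_zero)
  finally show ?thesis .
qed

lemma abs_hardy_op_le:
  fixes f :: "real \<Rightarrow> real"
  assumes f: "set_integrable lebesgue {0<..} f" and "0 < x"
  shows "ennreal \<bar>hardy_op f x\<bar> \<le> (\<integral>\<^sup>+t. ennreal \<bar>f t\<bar> * hardy_kernel x t \<partial>lebesgue_on {0<..})"
proof -
  have "set_integrable lebesgue {0<..x} f" "set_integrable lebesgue {x<..} f"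
    using \<open>0 < x\<close> by (auto intro!: set_integrable_subset[OF f])
  then have a: "\<bar>LINT t:{0<..x}|lebesgue. f t\<bar> \<le> (LINT t:{0<..x}|lebesgue. \<bar>f t\<bar>)"
    and b: "\<bar>LINT t:{x<..}|lebesgue. f t\<bar> \<le> (LINT t:{x<..}|lebesgue. \<bar>f t\<bar>)"
    using set_integral_norm_bound by fastforce+
  have "\<bar>hardy_op f x\<bar>
      \<le> \<bar>(LINT t:{0<..x}|lebesgue. f t) / (x * (1 + x))\<bar> + \<bar>(LINT t:{x<..}|lebesgue. f t) / (1 + x)\<bar>"
    unfolding hardy_op_eq[OF f \<open>0 < x\<close>] by (rule abs_triangle_ineq4)
  also have "\<dots> = \<bar>LINT t:{0<..x}|lebesgue. f t\<bar> / (x * (1 + x)) + \<bar>LINT t:{x<..}|lebesgue. f t\<bar> / (1 + x)"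
    using \<open>0 < x\<close> by (simp add: abs_divide abs_mult)
  also have "\<dots> \<le> (LINT t:{0<..x}|lebesgue. \<bar>f t\<bar>) / (x * (1 + x)) + (LINT t:{x<..}|lebesgue. \<bar>f t\<bar>) / (1 + x)"
    using \<open>0 < x\<close> a b by (intro add_mono divide_right_mono) auto
  also have "ennreal \<dots> = (\<integral>\<^sup>+t. ennreal \<bar>f t\<bar> * hardy_kernel x t \<partial>lebesgue_on {0<..})"
    using nn_integral_mult_hardy_kernel[OF set_integrable_abs[OF f] _ \<open>0 < x\<close>] by simp
  finally show ?thesis by (simp add: ennreal_leI)
qed

lemma min_le_hardy_kernel:
  fixes a b x :: real
  assumes "0 \<le> a" "0 \<le> b" "0 < x"
  shows "min (a / (x * (1 + x))) (b / (1 + x)) \<le> (a + b) * hardy_kernel x 1"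
proof (cases "1 \<le> x")
  case True
  then have "a / (x * (1 + x)) \<le> (a + b) * hardy_kernel x 1"
    using assms by (simp add: hardy_kernel_def divide_right_mono)
  then show ?thesis by linarith
next
  case False
  then have "b / (1 + x) \<le> (a + b) * hardy_kernel x 1"
    using assms by (simp add: hardy_kernel_def divide_right_mono)
  then show ?thesis by linarith
qed

lemma nn_integral_mult_hardy_kernel_le:
  fixes f :: "real \<Rightarrow> real"
  assumes f: "set_integrable lebesgue {0<..} f" and nonneg: "\<And>t. 0 < t \<Longrightarrow> 0 \<le> f t"
    and "0 < x"
  shows "(\<integral>\<^sup>+t. ennreal (f t) * hardy_kernel x t \<partial>lebesgue_on {0<..})
       \<le> ennreal (\<bar>hardy_op f x\<bar> + 2 * (LINT t:{0<..}|lebesgue. f t) * hardy_kernel x 1)"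
proof -
  define a where "a = (LINT t:{0<..x}|lebesgue. f t)"
  define b where "b = (LINT t:{x<..}|lebesgue. f t)"
  have "0 \<le> a" "0 \<le> b"
    using nonneg \<open>0 < x\<close> unfolding a_def b_def set_lebesgue_integral_def
    by (auto intro!: integral_nonneg split: split_indicator)
  have "a / (x * (1 + x)) + b / (1 + x)
      = \<bar>a / (x * (1 + x)) - b / (1 + x)\<bar> + 2 * min (a / (x * (1 + x))) (b / (1 + x))"
    by (simp add: min_def)
  also have "\<dots> \<le> \<bar>a / (x * (1 + x)) - b / (1 + x)\<bar> + 2 * ((a + b) * hardy_kernel x 1)"
    using min_le_hardy_kernel[OF \<open>0 \<le> a\<close> \<open>0 \<le> b\<close> \<open>0 < x\<close>] by linarith
  also have "\<dots> = \<bar>hardy_op f x\<bar> + 2 * (LINT t:{0<..}|lebesgue. f t) * hardy_kernel x 1"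
    by (simp add: a_def b_def hardy_op_eq[OF f \<open>0 < x\<close>] set_integral_greaterThan_split[OF f \<open>0 < x\<close>])
  finally show ?thesis
    using \<open>0 < x\<close> by (simp add: nn_integral_mult_hardy_kernel[OF f nonneg] a_def b_def ennreal_leI)
qed

lemma integrable_hardy_op:
  fixes f :: "real \<Rightarrow> real"
  assumes f: "set_integrable lebesgue {0<..} f"
    and fw: "integrable (lebesgue_on {0<..}) (\<lambda>t. \<bar>f t\<bar> * log_weight t)"
  shows "integrable (lebesgue_on {0<..}) (hardy_op f)"
proof (rule integrableI_bounded)
  show "hardy_op f \<in> borel_measurable (lebesgue_on {0<..})"
    using f by (rule borel_measurable_hardy_op)
  have [measurable]: "f \<in> borel_measurable (lebesgue_on {0<..})"
    using f by (simp add: set_integrable_eq)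
  have "(\<integral>\<^sup>+x. ennreal (norm (hardy_op f x)) \<partial>lebesgue_on {0<..})
      \<le> (\<integral>\<^sup>+x. (\<integral>\<^sup>+t. ennreal \<bar>f t\<bar> * hardy_kernel x t \<partial>lebesgue_on {0<..}) \<partial>lebesgue_on {0<..})"
    by (intro nn_integral_mono) (simp add: abs_hardy_op_le[OF f])
  also have "\<dots> = (\<integral>\<^sup>+t. ennreal \<bar>f t\<bar> * log_weight t \<partial>lebesgue_on {0<..})"
    by (intro nn_integral_log_weight_eq_hardy_kernel[symmetric]) measurable
  also have "\<dots> = (\<integral>\<^sup>+t. ennreal (norm (\<bar>f t\<bar> * log_weight t)) \<partial>lebesgue_on {0<..})"
    by (intro nn_integral_cong) (simp add: ennreal_mult' abs_mult log_weight_nonneg)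
  also have "\<dots> < \<infinity>"
    using fw by (simp add: integrable_iff_bounded)
  finally show "(\<integral>\<^sup>+x. ennreal (norm (hardy_op f x)) \<partial>lebesgue_on {0<..}) < \<infinity>" .
qed

lemma integrable_mult_log_weight:
  fixes f :: "real \<Rightarrow> real"
  assumes f: "set_integrable lebesgue {0<..} f" and nonneg: "\<And>t. 0 < t \<Longrightarrow> 0 \<le> f t"
    and H: "integrable (lebesgue_on {0<..}) (hardy_op f)"
  shows "integrable (lebesgue_on {0<..}) (\<lambda>t. f t * log_weight t)"
proof (rule integrableI_bounded)
  let ?S = "LINT t:{0<..}|lebesgue. f t"
  have [measurable]: "f \<in> borel_measurable (lebesgue_on {0<..})"
    using f by (simp add: set_integrable_eq)
  have [measurable]: "hardy_op f \<in> borel_measurable (lebesgue_on {0<..})"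
    using H by (rule borel_measurable_integrable)
  show "(\<lambda>t. f t * log_weight t) \<in> borel_measurable (lebesgue_on {0<..})"
    unfolding log_weight_def by measurable
  have "0 \<le> ?S"
    using nonneg unfolding set_lebesgue_integral_def
    by (auto intro!: integral_nonneg split: split_indicator)
  have "(\<integral>\<^sup>+t. ennreal (norm (f t * log_weight t)) \<partial>lebesgue_on {0<..})
      = (\<integral>\<^sup>+t. ennreal (f t) * log_weight t \<partial>lebesgue_on {0<..})"
    by (intro nn_integral_cong) (simp add: ennreal_mult' abs_mult nonneg log_weight_nonneg)
  also have "\<dots> = (\<integral>\<^sup>+x. (\<integral>\<^sup>+t. ennreal (f t) * hardy_kernel x t \<partial>lebesgue_on {0<..}) \<partial>lebesgue_on {0<..})"
    by (intro nn_integral_log_weight_eq_hardy_kernel) measurable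
  also have "\<dots> \<le> (\<integral>\<^sup>+x. ennreal (\<bar>hardy_op f x\<bar> + 2 * ?S * hardy_kernel x 1) \<partial>lebesgue_on {0<..})"
    by (intro nn_integral_mono) (simp add: nn_integral_mult_hardy_kernel_le[OF f nonneg])
  also have "\<dots> = (\<integral>\<^sup>+x. ennreal (norm (hardy_op f x)) + ennreal (2 * ?S) * hardy_kernel x 1 \<partial>lebesgue_on {0<..})"
    using \<open>0 \<le> ?S\<close> by (intro nn_integral_cong) (simp add: ennreal_mult hardy_kernel_nonneg)
  also have "\<dots> = (\<integral>\<^sup>+x. ennreal (norm (hardy_op f x)) \<partial>lebesgue_on {0<..})
      + ennreal (2 * ?S) * (\<integral>\<^sup>+x. hardy_kernel x 1 \<partial>lebesgue_on {0<..})"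
  proof -
    have "(\<lambda>x. ennreal (hardy_kernel x 1)) \<in> borel_measurable (lebesgue_on {0<..})"
      unfolding hardy_kernel_def by measurable
    then show ?thesis
      by (simp add: nn_integral_add nn_integral_cmult)
  qed
  also have "\<dots> < \<infinity>"
    using H by (simp add: integrable_iff_bounded nn_integral_hardy_kernel ennreal_mult_less_top)
  finally show "(\<integral>\<^sup>+t. ennreal (norm (f t * log_weight t)) \<partial>lebesgue_on {0<..}) < \<infinity>" .
qed

theorem theorem2p3:
  fixes f :: "real \<Rightarrow> real"
  assumes f_L1: "integrable (lebesgue_on {0<..}) f"
  shows "(integrable (lebesgue_on {0<..}) (\<lambda>t. \<bar>f t\<bar> * log_weight t)
           \<longrightarrow> integrable (lebesgue_on {0<..}) (hardy_op f))
       \<and> ((\<forall>t>0. f t \<ge> 0) \<and> integrable (lebesgue_on {0<..}) (hardy_op f)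
           \<longrightarrow> integrable (lebesgue_on {0<..}) (\<lambda>t. f t * log_weight t))"
proof -
  have f: "set_integrable lebesgue {0<..} f"
    using f_L1 by (simp add: set_integrable_eq)
  show ?thesis
    using integrable_hardy_op[OF f] integrable_mult_log_weight[OF f] by blast
qed

end
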